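(* Let $0\le\lambda<1$, let $Y_1,Y_2,\ldots$ be i.i.d. Poisson random variables with mean $\lambda$, and define $X=0$ if $Y_1=0$ and otherwise $X=\min\{z\ge1:\sum_{i=1}^{z}Y_i\le z\}$. Let $W=\max(X,1)$. Then $$\Pr(W=w)=\begin{cases}(\lambda+1)e^{-\lambda}, & w=1,\\ \dfrac{(w-1)^{w-2}}{w\,(w-2)!}\lambda^{w}e^{-w\lambda}, & w\ge2,\end{cases}$$ and, for $\lambda>0$, $$\mathbb{E}[W]=\frac{1}{\lambda}\mathbb{E}[X]=\frac{e^{-\lambda}}{1-\lambda}.$$
   Context: $\mathbb{E}[X]=\frac{\lambda}{1-\lambda}e^{-\lambda}$ is the mean of $X$; $W$ is the inter-renewal time of a modified renewal process in which every inter-decoding time of $0$ slots is replaced by $1$ slot. *)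

theory Defs
  imports "HOL-Probability.Probability"
begin

text \<open>The random variable X of the paper: X = 0 if Y 1 = 0, otherwise the least
  z >= 1 with Y 1 + ... + Y z <= z.  (On the null event where no such z exists,
  LEAST yields an unspecified value.)\<close>
definition stop_time :: "(nat \<Rightarrow> 'a \<Rightarrow> nat) \<Rightarrow> 'a \<Rightarrow> nat" where
  "stop_time Y \<omega> = (if Y 1 \<omega> = 0 then 0
      else (LEAST z. 1 \<le> z \<and> (\<Sum>i=1..z. Y i \<omega>) \<le> z))"

end

theory Submission
  imports Defs
begin

text \<open>With \<open>S_z = Y_1 + ... + Y_z\<close>, the time \<open>X\<close> is the first \<open>z \<ge> 1\<close> at which the walk
  \<open>S_z - z\<close>, which moves down by at most one per step, reaches \<open>0\<close> or below. Hence \<open>X = w \<ge> 2\<close>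
  exactly when \<open>Y_1 = j + 2\<close> and the walk then passes from height \<open>j + 1\<close> to \<open>0\<close> for the first
  time after \<open>w - 1\<close> steps. By the hitting time theorem the Poisson weight of such paths is
  governed by \<open>h n^(n-h-1) / (n-h)!\<close>, proved here by a one-step recursion and binomial sums;
  summing over \<open>j\<close> gives the law of \<open>W\<close>.

  For the means, the negative drift \<open>\<lambda> - 1\<close> makes first passage from every height \<open>h\<close> almost
  sure (a law of large numbers for Poisson sums), which yields the generating function identity
  \<open>\<Sum>_n h n^(n-h-1) / (n-h)! (\<lambda> e^-\<lambda>)^n = \<lambda>^h\<close>. Summing over \<open>h\<close> gives
  \<open>\<Sum>_n n^n / n! (\<lambda> e^-\<lambda>)^n = 1 / (1 - \<lambda>)\<close>, whence \<open>E[X] = \<lambda> e^-\<lambda> / (1 - \<lambda>)\<close> and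
  \<open>E[W] = E[X] + P(X = 0)\<close>.\<close>

section \<open>First passages of lattice walks\<close>

text \<open>The walk starting at height \<open>h\<close> with steps \<open>y - 1\<close> stays positive and reaches \<open>0\<close> exactly at
  the end of \<open>ys\<close>; the truncated subtraction is harmless because \<open>h > 0\<close> before every step.\<close>
fun first_passage :: "nat \<Rightarrow> nat list \<Rightarrow> bool" where
  "first_passage h [] = (h = 0)"
| "first_passage h (y # ys) = (0 < h \<and> first_passage (h + y - 1) ys)"

lemma first_passage_iff:
  "first_passage h ys \<longleftrightarrow>
     (\<forall>z<length ys. z < h + sum_list (take z ys)) \<and> h + sum_list ys = length ys"
proof (induction ys arbitrary: h)
  case Nil
  then show ?case by simp
next
  case (Cons y ys)
  show ?case
  proof
    assume "first_passage h (y # ys)"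
    then have h: "0 < h" and "first_passage (h + y - 1) ys" by auto
    with Cons.IH have above: "\<forall>z<length ys. z < h + y - 1 + sum_list (take z ys)"
      and sum: "h + y - 1 + sum_list ys = length ys" by auto
    have "z < h + sum_list (take z (y # ys))" if "z < length (y # ys)" for z
      using that above h by (cases z) auto
    with sum h show "(\<forall>z<length (y # ys). z < h + sum_list (take z (y # ys)))
        \<and> h + sum_list (y # ys) = length (y # ys)" by auto
  next
    assume R: "(\<forall>z<length (y # ys). z < h + sum_list (take z (y # ys)))
        \<and> h + sum_list (y # ys) = length (y # ys)"
    then have h: "0 < h" by (metis length_Cons add_0_right sum_list.Nil take0 zero_less_Suc)
    have "z < h + y - 1 + sum_list (take z ys)" if "z < length ys" for z
      using R that h by (auto dest!: spec[of _ "Suc z"])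
    moreover have "h + y - 1 + sum_list ys = length ys" using R h by auto
    ultimately show "first_passage h (y # ys)" using Cons.IH h by auto
  qed
qed

lemma first_passage_sum_list: "first_passage h ys \<Longrightarrow> h + sum_list ys = length ys"
  by (simp add: first_passage_iff)

lemma first_passage_append: "first_passage h xs \<Longrightarrow> first_passage h (xs @ zs) \<Longrightarrow> zs = []"
  by (induction xs arbitrary: h) (auto elim: first_passage.elims)

lemma first_passage_prefix_or_above:
  "0 < h \<Longrightarrow> (\<exists>m\<le>length ys. first_passage h (take m ys)) \<or> length ys < h + sum_list ys"
proof (induction ys arbitrary: h)
  case Nil
  then show ?case by simp
next
  case (Cons y ys)
  show ?case
  proof (cases "h + y - 1 = 0")
    case True
    then have "first_passage h (take 1 (y # ys))" using Cons.prems by simp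
    then show ?thesis by (metis One_nat_def Suc_le_mono le0 length_Cons)
  next
    case False
    then have "0 < h + y - 1" by simp
    from Cons.IH[OF this] show ?thesis
    proof
      assume "\<exists>m\<le>length ys. first_passage (h + y - 1) (take m ys)"
      then obtain m where "m \<le> length ys" "first_passage (h + y - 1) (take m ys)" by blast
      then have "Suc m \<le> length (y # ys)" "first_passage h (take (Suc m) (y # ys))"
        using Cons.prems by auto
      then show ?thesis by blast
    qed auto
  qed
qed

lemma finite_lists_sum_list_le: "finite {ys::nat list. length ys = n \<and> sum_list ys \<le> K}"
proof (rule finite_subset)
  show "{ys::nat list. length ys = n \<and> sum_list ys \<le> K} \<subseteq> {ys. set ys \<subseteq> {..K} \<and> length ys = n}"
    using member_le_sum_list by fastforce
qed (rule finite_lists_length_eq, simp)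

definition first_passages :: "nat \<Rightarrow> nat \<Rightarrow> nat list set" where
  "first_passages n h = {ys. length ys = n \<and> first_passage h ys}"

definition lists_with_sum :: "nat \<Rightarrow> nat \<Rightarrow> nat list set" where
  "lists_with_sum n k = {ys. length ys = n \<and> sum_list ys = k}"

lemma finite_first_passages: "finite (first_passages n h)"
  by (rule finite_subset[OF _ finite_lists_sum_list_le[of n n]])
    (auto simp: first_passages_def dest: first_passage_sum_list)

lemma finite_lists_with_sum: "finite (lists_with_sum n k)"
  by (rule finite_subset[OF _ finite_lists_sum_list_le[of n k]]) (auto simp: lists_with_sum_def)

lemma first_passages_Suc:
  assumes "0 < h"
  shows "first_passages (Suc n) h = (\<Union>y\<le>n. Cons y ` first_passages n (h + y - 1))"
proof (intro equalityI subsetI)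
  fix ys assume ys: "ys \<in> first_passages (Suc n) h"
  then obtain y zs where ys_eq: "ys = y # zs" unfolding first_passages_def by (cases ys) auto
  with ys assms have zs: "zs \<in> first_passages n (h + y - 1)"
    by (auto simp: first_passages_def)
  then have "y \<le> n" using assms by (auto simp: first_passages_def dest: first_passage_sum_list)
  with ys_eq zs show "ys \<in> (\<Union>y\<le>n. Cons y ` first_passages n (h + y - 1))" by blast
qed (use assms in \<open>auto simp: first_passages_def\<close>)

lemma lists_with_sum_Suc:
  "lists_with_sum (Suc n) k = (\<Union>y\<le>k. Cons y ` lists_with_sum n (k - y))"
proof (intro equalityI subsetI)
  fix ys assume ys: "ys \<in> lists_with_sum (Suc n) k"
  then obtain y zs where ys_eq: "ys = y # zs" unfolding lists_with_sum_def by (cases ys) auto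
  with ys have "y \<in> {..k}" "zs \<in> lists_with_sum n (k - y)" by (auto simp: lists_with_sum_def)
  with ys_eq show "ys \<in> (\<Union>y\<le>k. Cons y ` lists_with_sum n (k - y))" by blast
qed (auto simp: lists_with_sum_def)

lemma sum_UN_Cons:
  assumes "finite I" "\<And>y. finite (A y)" "inj_on g I"
  shows "(\<Sum>ys\<in>(\<Union>y\<in>I. Cons (g y) ` A y). f ys) = (\<Sum>y\<in>I. \<Sum>zs\<in>A y. f (g y # zs))"
proof -
  have "(\<Sum>ys\<in>(\<Union>y\<in>I. Cons (g y) ` A y). f ys) = (\<Sum>y\<in>I. \<Sum>ys\<in>Cons (g y) ` A y. f ys)"
    by (rule sum.UNION_disjoint) (use assms in \<open>auto dest: inj_onD\<close>)
  also have "\<dots> = (\<Sum>y\<in>I. \<Sum>zs\<in>A y. f (g y # zs))"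
    by (simp add: sum.reindex)
  finally show ?thesis .
qed

definition fact_weight :: "nat list \<Rightarrow> real" where
  "fact_weight ys = (\<Prod>y\<leftarrow>ys. 1 / fact y)"

lemma fact_weight_simps [simp]:
  "fact_weight [] = 1" "fact_weight (y # ys) = fact_weight ys / fact y"
  by (simp_all add: fact_weight_def)

lemma sum_fact_weight_UN_Cons:
  assumes "finite I" "\<And>y. finite (A y)"
  shows "(\<Sum>ys\<in>(\<Union>y\<in>I. Cons y ` A y). fact_weight ys) = (\<Sum>y\<in>I. (\<Sum>zs\<in>A y. fact_weight zs) / fact y)"
  using sum_UN_Cons[of I A id fact_weight] assms by (simp add: sum_divide_distrib)

lemma sum_binomial_fact:
  "(\<Sum>y\<le>m. (a::real) ^ (m - y) / (fact y * fact (m - y))) = (a + 1) ^ m / fact m"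
proof -
  have "(a + 1) ^ m = (\<Sum>y\<le>m. of_nat (m choose y) * 1 ^ y * a ^ (m - y))"
    using binomial_ring[of 1 a m] by (simp add: add.commute)
  also have "\<dots> = fact m * (\<Sum>y\<le>m. a ^ (m - y) / (fact y * fact (m - y)))"
    by (simp add: binomial_fact sum_distrib_left)
  finally show ?thesis by (simp add: field_simps)
qed

lemma sum_index_binomial_fact:
  "(\<Sum>y\<le>Suc m. real y * (a::real) ^ (Suc m - y) / (fact y * fact (Suc m - y)))
     = (a + 1) ^ m / fact m"
proof -
  have "(\<Sum>y\<le>Suc m. real y * a ^ (Suc m - y) / (fact y * fact (Suc m - y)))
      = (\<Sum>y\<le>m. real (Suc y) * a ^ (m - y) / (fact (Suc y) * fact (m - y)))"
    by (subst sum.atMost_Suc_shift) simp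
  also have "\<dots> = (\<Sum>y\<le>m. a ^ (m - y) / (fact y * fact (m - y)))"
    by (simp add: fact_Suc field_simps del: of_nat_Suc)
  finally show ?thesis by (simp add: sum_binomial_fact)
qed

text \<open>The weighted number \<open>h n^(n-h-1) / (n-h)!\<close> of first passages from height \<open>h\<close> in
  \<open>n\<close> steps (hitting time theorem); the exponent is kept nonnegative by dividing by \<open>n\<close>.\<close>
definition ballot_weight :: "nat \<Rightarrow> nat \<Rightarrow> real" where
  "ballot_weight n h = (if h = 0 then (if n = 0 then 1 else 0) else if n < h then 0
     else real h * real n ^ (n - h) / (real n * fact (n - h)))"

lemma ballot_weight_nonneg: "0 \<le> ballot_weight n h"
  by (simp add: ballot_weight_def)

lemma ballot_weight_Suc_Suc:
  "ballot_weight (Suc n) (Suc k) = (\<Sum>y\<le>n. ballot_weight n (k + y) / fact y)"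
proof (cases "n = 0 \<or> n < k")
  case True
  then show ?thesis by (auto simp: ballot_weight_def)
next
  case False
  then have kn: "k \<le> n" "1 \<le> n" by auto
  define m where "m = n - k"
  have n: "real n = real k + real m" "real n > 0" using kn by (simp_all add: m_def)
  have "(\<Sum>y\<le>n. ballot_weight n (k + y) / fact y) = (\<Sum>y\<le>m. ballot_weight n (k + y) / fact y)"
    by (rule sum.mono_neutral_right) (auto simp: ballot_weight_def m_def)
  also have "\<dots>
      = (\<Sum>y\<le>m. (real k * (real n ^ (m - y) / (fact y * fact (m - y)))
         + real y * real n ^ (m - y) / (fact y * fact (m - y))) / real n)"
    using kn by (intro sum.cong) (auto simp: ballot_weight_def m_def field_simps)
  also have "\<dots> = (real k * (\<Sum>y\<le>m. real n ^ (m - y) / (fact y * fact (m - y)))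
         + (\<Sum>y\<le>m. real y * real n ^ (m - y) / (fact y * fact (m - y)))) / real n"
    by (simp only: sum_divide_distrib[symmetric] sum.distrib sum_distrib_left)
  also have "\<dots> = real (Suc k) * (real n + 1) ^ m / ((real n + 1) * fact m)"
  proof (cases m)
    case 0
    then show ?thesis using n by simp
  next
    case (Suc m')
    have index_sum: "(\<Sum>y\<le>m. real y * real n ^ (m - y) / (fact y * fact (m - y)))
        = (real n + 1) ^ m' / fact m'"
      unfolding Suc by (rule sum_index_binomial_fact)
    have field_identity: "(K * ((N + 1) * P / ((M + 1) * F)) + P / F) / N
            = (K + 1) * ((N + 1) * P) / ((N + 1) * ((M + 1) * F))"
          if "0 < F" "0 \<le> M" "N = K + M + 1" "0 < N" for K N M P F :: real
    proof -
      have nz: "M + 1 \<noteq> 0" "N + 1 \<noteq> 0" "F \<noteq> 0" "N \<noteq> 0" using that by auto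
      have "P / F = (M + 1) * P / ((M + 1) * F)" using nz by simp
      then have "K * ((N + 1) * P / ((M + 1) * F)) + P / F = (K * (N + 1) + (M + 1)) * P / ((M + 1) * F)"
        by (simp only: times_divide_eq_right add_divide_distrib[symmetric]) (simp add: algebra_simps)
      also have "K * (N + 1) + (M + 1) = (K + 1) * N" using that by (simp add: algebra_simps)
      finally show ?thesis using nz by simp
    qed
    have "real n = real k + real m' + 1" using n Suc by simp
    then show ?thesis
      unfolding sum_binomial_fact index_sum unfolding Suc power_Suc fact_Suc of_nat_Suc
      using field_identity[of "fact m'" "real m'" "real n" "real k" "(real n + 1) ^ m'"] n
      by (simp add: add.commute)
  qed
  finally show ?thesis using kn by (simp add: ballot_weight_def m_def add.commute)
qed

lemma sum_fact_weight_first_passages: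
  "(\<Sum>ys\<in>first_passages n h. fact_weight ys) = ballot_weight n h"
proof (induction n arbitrary: h)
  case 0
  have "first_passages 0 h = (if h = 0 then {[]} else {})" by (auto simp: first_passages_def)
  then show ?case by (simp add: ballot_weight_def)
next
  case (Suc n)
  show ?case
  proof (cases h)
    case 0
    then have "first_passages (Suc n) h = {}" by (auto simp: first_passages_def length_Suc_conv)
    then show ?thesis using 0 by (simp add: ballot_weight_def)
  next
    case (Suc k)
    then have "(\<Sum>ys\<in>first_passages (Suc n) h. fact_weight ys)
        = (\<Sum>y\<le>n. (\<Sum>zs\<in>first_passages n (k + y). fact_weight zs) / fact y)"
      by (simp add: first_passages_Suc sum_fact_weight_UN_Cons finite_first_passages)
    then show ?thesis by (simp add: Suc.IH Suc ballot_weight_Suc_Suc)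
  qed
qed

lemma sum_fact_weight_lists_with_sum:
  "(\<Sum>ys\<in>lists_with_sum n k. fact_weight ys) = real n ^ k / fact k"
proof (induction n arbitrary: k)
  case 0
  have "lists_with_sum 0 k = (if k = 0 then {[]} else {})" by (auto simp: lists_with_sum_def)
  then show ?case by simp
next
  case (Suc n)
  have "(\<Sum>ys\<in>lists_with_sum (Suc n) k. fact_weight ys)
      = (\<Sum>y\<le>k. (\<Sum>zs\<in>lists_with_sum n (k - y). fact_weight zs) / fact y)"
    by (simp add: lists_with_sum_Suc sum_fact_weight_UN_Cons finite_lists_with_sum)
  also have "\<dots> = (real n + 1) ^ k / fact k"
    by (simp add: Suc.IH sum_binomial_fact[symmetric] mult.commute)
  finally show ?case by (simp add: add.commute)
qed

lemma sum_ballot_weight_over_fact: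
  "(\<Sum>j\<le>v. ballot_weight (v + 1) (j + 1) / fact (j + 2)) = real (v + 1) ^ v / (real (v + 2) * fact v)"
proof -
  define a where "a = real (v + 1)"
  define F where "F y = (real y - 1) * a ^ (Suc (Suc v) - y) / (fact y * fact (Suc (Suc v) - y))" for y
  \<comment> \<open>\<open>F\<close> sums to \<open>0\<close> since the two binomial sums agree at \<open>a = v + 1\<close>; its term \<open>F 1\<close> vanishes.\<close>
  have "(\<Sum>y\<le>Suc (Suc v). F y)
      = (\<Sum>y\<le>Suc (Suc v). real y * a ^ (Suc (Suc v) - y) / (fact y * fact (Suc (Suc v) - y)))
        - (\<Sum>y\<le>Suc (Suc v). a ^ (Suc (Suc v) - y) / (fact y * fact (Suc (Suc v) - y)))"
    by (simp add: F_def diff_divide_distrib left_diff_distrib sum_subtractf)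
  also have "\<dots> = (a + 1) ^ Suc v / fact (Suc v) - (a + 1) ^ Suc (Suc v) / fact (Suc (Suc v))"
    by (simp only: sum_index_binomial_fact sum_binomial_fact)
  also have "\<dots> = 0"
  proof -
    have "a + 1 = real (Suc (Suc v))" by (simp add: a_def)
    then show ?thesis by (simp add: fact_Suc field_simps del: of_nat_Suc)
  qed
  finally have "(\<Sum>y\<le>Suc (Suc v). F y) = 0" .
  moreover have "(\<Sum>y\<le>Suc (Suc v). F y) = F 0 + F 1 + (\<Sum>j\<le>v. F (j + 2))"
    by (simp only: sum.atMost_Suc_shift) simp
  moreover have "F 0 = - (a ^ Suc (Suc v) / fact (Suc (Suc v)))" "F 1 = 0" by (simp_all add: F_def)
  ultimately have sum_F: "(\<Sum>j\<le>v. F (j + 2)) = a ^ Suc (Suc v) / fact (Suc (Suc v))"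
    by simp
  have "(\<Sum>j\<le>v. ballot_weight (v + 1) (j + 1) / fact (j + 2)) = (\<Sum>j\<le>v. F (j + 2) / a)"
    by (rule sum.cong) (auto simp: ballot_weight_def F_def a_def Suc_diff_le)
  also have "\<dots> = a ^ Suc (Suc v) / fact (Suc (Suc v)) / a"
    by (simp only: sum_divide_distrib[symmetric] sum_F)
  also have "\<dots> = real (v + 1) ^ v / (real (v + 2) * fact v)"
    by (simp add: a_def fact_Suc field_simps del: of_nat_Suc)
  finally show ?thesis .
qed

lemma sum_ballot_weight: "(\<Sum>h\<le>m. ballot_weight m h) = real m ^ m / fact m"
proof (cases "m = 0")
  case True
  then show ?thesis by (simp add: ballot_weight_def)
next
  case False
  then have m_pos: "0 < m" by simp
  have partial_sums: "(\<Sum>j<Suc k. (real m - real j) * real m ^ j / (real m * fact j)) = real m ^ k / fact k"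
    for k
    using m_pos by (induction k) (simp_all add: fact_Suc field_simps del: of_nat_Suc)
  obtain k where k: "m = Suc k" using m_pos by (cases m) auto
  have "(\<Sum>h\<le>m. ballot_weight m h) = (\<Sum>h = 1..m. ballot_weight m h)"
    using m_pos by (intro sum.mono_neutral_right) (auto simp: ballot_weight_def)
  also have "\<dots> = (\<Sum>j<m. ballot_weight m (m - j))"
    by (rule sum.reindex_bij_witness[of _ "\<lambda>h. m - h" "\<lambda>j. m - j"]) auto
  also have "\<dots> = (\<Sum>j<Suc k. (real m - real j) * real m ^ j / (real m * fact j))"
    unfolding k[symmetric] by (rule sum.cong) (auto simp: ballot_weight_def of_nat_diff)
  also have "\<dots> = real m ^ m / fact m"
    unfolding partial_sums by (simp add: k fact_Suc field_simps del: of_nat_Suc)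
  finally show ?thesis .
qed

section \<open>Series estimates\<close>

lemma sums_row_sums_lower_triangular:
  fixes a :: "nat \<Rightarrow> nat \<Rightarrow> real"
  assumes nonneg: "\<And>m h. 0 \<le> a m h" and zero: "\<And>m h. m < h \<Longrightarrow> a m h = 0"
    and columns: "\<And>h. (\<lambda>m. a m h) sums c h" and "summable c"
  shows "(\<lambda>m. \<Sum>h\<le>m. a m h) sums suminf c"
proof -
  define A where "A m = (\<Sum>h\<le>m. a m h)" for m
  have c_nonneg: "0 \<le> c h" for h
    using columns[of h] nonneg by (metis sums_unique suminf_nonneg sums_summable)
  have column_le: "(\<Sum>m<n. a m h) \<le> c h" for n h
    using columns[of h] nonneg by (metis sums_summable sums_unique sum_le_suminf finite_lessThan)
  have partial_le: "(\<Sum>m<n. A m) \<le> suminf c" for n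
  proof -
    have "(\<Sum>m<n. A m) = (\<Sum>m<n. \<Sum>h<n. a m h)"
      unfolding A_def by (intro sum.cong refl sum.mono_neutral_left) (auto intro: zero)
    also have "\<dots> = (\<Sum>h<n. \<Sum>m<n. a m h)" by (rule sum.swap)
    also have "\<dots> \<le> (\<Sum>h<n. c h)" by (intro sum_mono column_le)
    also have "\<dots> \<le> suminf c" using \<open>summable c\<close> c_nonneg by (intro sum_le_suminf) auto
    finally show ?thesis .
  qed
  have "summable A"
    by (rule summableI_nonneg_bounded[OF _ partial_le]) (simp add: A_def sum_nonneg nonneg)
  have "suminf c \<le> suminf A"
  proof (rule suminf_le_const[OF \<open>summable c\<close>])
    fix H
    have "(\<Sum>h<H. c h) = (\<Sum>h<H. \<Sum>m. a m h)"
      using columns by (simp add: sums_iff)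
    also have "\<dots> = (\<Sum>m. \<Sum>h<H. a m h)"
      using columns by (intro suminf_sum[symmetric]) (auto simp: sums_iff)
    also have "\<dots> \<le> suminf A"
    proof (rule suminf_le)
      show "(\<Sum>h<H. a m h) \<le> A m" for m
      proof -
        have "(\<Sum>h<H. a m h) = (\<Sum>h\<in>{..<H} \<inter> {..m}. a m h)"
          by (rule sum.mono_neutral_right) (auto intro: zero)
        also have "\<dots> \<le> A m" unfolding A_def by (rule sum_mono2) (auto intro: nonneg)
        finally show ?thesis .
      qed
      show "summable (\<lambda>m. \<Sum>h<H. a m h)"
        using columns by (intro summable_sum) (auto simp: sums_iff)
    qed fact
    finally show "(\<Sum>h<H. c h) \<le> suminf A" .
  qed
  with suminf_le_const[OF \<open>summable A\<close> partial_le] \<open>summable A\<close> show ?thesis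
    unfolding A_def[symmetric] by (metis antisym summable_sums)
qed

lemma exp_sums_real: "(\<lambda>k. x ^ k / fact k) sums exp (x::real)"
  using exp_converges[of x] by (simp add: divide_inverse mult.commute)

lemma sum_exp_series_le_exp:
  assumes "0 \<le> (x::real)"
  shows "(\<Sum>k\<le>K. x ^ k / fact k) \<le> exp x"
  using assms by (intro sum_le_suminf[OF sums_summable[OF exp_sums_real], of "{..K}",
      unfolded sums_unique[OF exp_sums_real, symmetric]]) auto

text \<open>A Chernoff-type bound on the tail of the exponential series: compare \<open>x^k\<close> with
  \<open>(t x)^k / t^K\<close> for \<open>k > K\<close>.\<close>
lemma exp_tail_le:
  fixes x t :: real
  assumes x: "0 \<le> x" and t: "1 \<le> t"
  shows "exp x - (\<Sum>k\<le>K. x ^ k / fact k) \<le> exp (x * t) / t ^ K"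
proof -
  have partial: "(\<lambda>k. if k \<in> {..K} then x ^ k / fact k else 0) sums (\<Sum>k\<le>K. x ^ k / fact k)"
    using sums_If_finite_set[of "{..K}" "\<lambda>k. x ^ k / fact k"] by simp
  have tail: "(\<lambda>k. (x * t) ^ k / fact k / t ^ K) sums (exp (x * t) / t ^ K)"
    by (rule sums_divide[OF exp_sums_real])
  have "x ^ k / fact k \<le> (if k \<in> {..K} then x ^ k / fact k else 0) + (x * t) ^ k / fact k / t ^ K"
    for k
  proof (cases "k \<le> K")
    case False
    have "t ^ K \<le> t ^ k" using False t by (intro power_increasing) auto
    then have "x ^ k / fact k * 1 \<le> x ^ k / fact k * (t ^ k / t ^ K)"
      using x t by (intro mult_left_mono) auto
    then show ?thesis using False by (simp add: power_mult_distrib)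
  qed (use x t in simp)
  then have "exp x \<le> (\<Sum>k\<le>K. x ^ k / fact k) + exp (x * t) / t ^ K"
    by (intro sums_le[OF _ exp_sums_real sums_add[OF partial tail]])
  then show ?thesis by simp
qed

lemma mult_exp_one_minus_less_one:
  assumes "0 < l" "l < (1::real)"
  shows "l * exp (1 - l) < 1"
proof -
  have "l < exp (l - 1)" using exp_minus_greater[of "1 - l"] assms by simp
  then have "l * exp (1 - l) < exp (l - 1) * exp (1 - l)" by simp
  then show ?thesis by (simp add: exp_add[symmetric])
qed

definition poisson_cdf :: "real \<Rightarrow> nat \<Rightarrow> real" where
  "poisson_cdf \<mu> K = (\<Sum>k\<le>K. \<mu> ^ k / fact k * exp (- \<mu>))"

lemma poisson_cdf_eq: "poisson_cdf \<mu> K = (\<Sum>k\<le>K. \<mu> ^ k / fact k) * exp (- \<mu>)"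
  by (simp add: poisson_cdf_def sum_distrib_right)

lemma poisson_cdf_le_1: "0 \<le> \<mu> \<Longrightarrow> poisson_cdf \<mu> K \<le> 1"
  using sum_exp_series_le_exp[of \<mu> K]
  by (simp add: poisson_cdf_eq exp_minus field_simps)

text \<open>A law of large numbers for Poisson variables of mean \<open>n l\<close> with \<open>l < 1\<close>: the tail beyond
  \<open>n - h\<close> is at most \<open>(l e^(1-l))^n / l^h\<close>, by the tail bound with \<open>t = 1/l\<close>.\<close>
lemma poisson_cdf_tendsto_1:
  assumes l: "0 \<le> l" "l < 1"
  shows "(\<lambda>n. poisson_cdf (real n * l) (n - h)) \<longlonglongrightarrow> 1"
proof (cases "l = 0")
  case True
  then show ?thesis by (simp add: poisson_cdf_def sum.atMost_shift zero_power)
next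
  case False
  with l have lp: "0 < l" by simp
  define r where "r = l * exp (1 - l)"
  have r: "0 \<le> r" "r < 1" using mult_exp_one_minus_less_one[OF lp l(2)] lp by (auto simp: r_def)
  have lower: "1 - r ^ n / l ^ h \<le> poisson_cdf (real n * l) (n - h)" if "h \<le> n" for n
  proof -
    define x where "x = real n * l"
    have "1 - poisson_cdf x (n - h) = (exp x - (\<Sum>k\<le>n - h. x ^ k / fact k)) * exp (- x)"
      by (simp add: poisson_cdf_eq left_diff_distrib exp_minus_inverse)
    also have "\<dots> \<le> exp (x * (1 / l)) / (1 / l) ^ (n - h) * exp (- x)"
      using lp l by (intro mult_right_mono exp_tail_le) (simp_all add: x_def)
    also have "\<dots> = l ^ n / l ^ h * exp (real n * (1 - l))"
      using lp that by (simp add: x_def power_divide power_diff exp_diff exp_minus field_simps)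
    also have "\<dots> = r ^ n / l ^ h"
      by (simp add: r_def power_mult_distrib exp_of_nat_mult[symmetric])
    finally show ?thesis by (simp add: x_def)
  qed
  show ?thesis
  proof (rule tendsto_sandwich[OF _ _ _ tendsto_const])
    show "\<forall>\<^sub>F n in sequentially. 1 - r ^ n / l ^ h \<le> poisson_cdf (real n * l) (n - h)"
      using eventually_ge_at_top[of h] by eventually_elim (rule lower)
    show "\<forall>\<^sub>F n in sequentially. poisson_cdf (real n * l) (n - h) \<le> 1"
      using poisson_cdf_le_1 l by simp
    have "(\<lambda>n. 1 - r ^ n / l ^ h) \<longlonglongrightarrow> 1 - 0 / l ^ h"
      by (intro tendsto_intros LIMSEQ_power_zero) (use r lp in auto)
    then show "(\<lambda>n. 1 - r ^ n / l ^ h) \<longlonglongrightarrow> 1" by simp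
  qed
qed

section \<open>Poisson probabilities of value lists\<close>

definition stopping_lists :: "nat \<Rightarrow> nat list set" where
  "stopping_lists w = {ys. length ys = w \<and> sum_list ys \<le> w
     \<and> (\<forall>z. 1 \<le> z \<and> z < w \<longrightarrow> z < sum_list (take z ys))}"

lemma finite_stopping_lists: "finite (stopping_lists w)"
  by (rule finite_subset[OF _ finite_lists_sum_list_le[of w w]]) (auto simp: stopping_lists_def)

lemma stopping_lists_Suc_Suc_iff:
  "ys \<in> stopping_lists (Suc (Suc v))
     \<longleftrightarrow> (\<exists>y zs. ys = y # zs \<and> 2 \<le> y \<and> zs \<in> first_passages (Suc v) (y - 1))"
proof
  assume ys: "ys \<in> stopping_lists (Suc (Suc v))"
  then obtain y zs where ys_eq: "ys = y # zs" and len: "length zs = Suc v"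
    unfolding stopping_lists_def by (cases ys) auto
  from ys have sum: "y + sum_list zs \<le> Suc (Suc v)"
    and above: "\<And>z. 1 \<le> z \<Longrightarrow> z < Suc (Suc v) \<Longrightarrow> z < sum_list (take z ys)"
    unfolding stopping_lists_def ys_eq by auto
  have y: "2 \<le> y" using above[of 1] by (simp add: ys_eq)
  have "z < y - 1 + sum_list (take z zs)" if "z < length zs" for z
  proof (cases z)
    case (Suc z')
    have "Suc z < sum_list (take (Suc z) ys)" using above[of "Suc z"] that len by simp
    then show ?thesis using y by (simp add: ys_eq)
  qed (use y in simp)
  moreover have "sum_list (take v zs) \<le> sum_list zs"
    by (metis append_take_drop_id le_add1 sum_list_append)
  then have "Suc v < y + sum_list zs"
    using above[of "Suc v"] by (simp add: ys_eq)
  then have "y - 1 + sum_list zs = length zs" using sum len y by simp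
  ultimately have "first_passage (y - 1) zs" by (simp add: first_passage_iff)
  then show "\<exists>y zs. ys = y # zs \<and> 2 \<le> y \<and> zs \<in> first_passages (Suc v) (y - 1)"
    using ys_eq y len by (auto simp: first_passages_def)
next
  assume "\<exists>y zs. ys = y # zs \<and> 2 \<le> y \<and> zs \<in> first_passages (Suc v) (y - 1)"
  then obtain y zs where ys_eq: "ys = y # zs" and y: "2 \<le> y" and len: "length zs = Suc v"
    and fp: "first_passage (y - 1) zs" by (auto simp: first_passages_def)
  from fp have above: "\<And>z. z < length zs \<Longrightarrow> z < y - 1 + sum_list (take z zs)"
    and sum: "y - 1 + sum_list zs = length zs" by (auto simp: first_passage_iff)
  have "Suc z < sum_list (take (Suc z) ys)" if "z < Suc v" for z
    using above[of z] that len y by (simp add: ys_eq)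
  then have "z < sum_list (take z ys)" if "1 \<le> z" "z < Suc (Suc v)" for z
    using that by (cases z) auto
  moreover have "sum_list ys \<le> Suc (Suc v)" using sum len y by (simp add: ys_eq)
  ultimately show "ys \<in> stopping_lists (Suc (Suc v))" using len by (auto simp: stopping_lists_def ys_eq)
qed

lemma stopping_lists_Suc_Suc:
  "stopping_lists (Suc (Suc v)) = (\<Union>j\<le>v. Cons (j + 2) ` first_passages (Suc v) (j + 1))"
proof (intro equalityI subsetI)
  fix ys assume "ys \<in> stopping_lists (Suc (Suc v))"
  then obtain y zs where ys: "ys = y # zs" "2 \<le> y" "zs \<in> first_passages (Suc v) (y - 1)"
    using stopping_lists_Suc_Suc_iff by blast
  then have "y - 2 \<le> v"
    by (auto simp: first_passages_def dest: first_passage_sum_list)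
  moreover have "ys = (y - 2 + 2) # zs" "zs \<in> first_passages (Suc v) (y - 2 + 1)"
    using ys by (auto simp: numeral_2_eq_2 Suc_diff_Suc)
  ultimately show "ys \<in> (\<Union>j\<le>v. Cons (j + 2) ` first_passages (Suc v) (j + 1))" by blast
qed (auto simp: stopping_lists_Suc_Suc_iff)

definition poisson_prob_list :: "real \<Rightarrow> nat list \<Rightarrow> real" where
  "poisson_prob_list lam ys = (\<Prod>y\<leftarrow>ys. lam ^ y / fact y * exp (- lam))"

lemma poisson_prob_list_Cons [simp]:
  "poisson_prob_list lam (y # ys) = lam ^ y / fact y * exp (- lam) * poisson_prob_list lam ys"
  by (simp add: poisson_prob_list_def)

lemma poisson_prob_list_eq:
  "poisson_prob_list lam ys = lam ^ sum_list ys * exp (- lam) ^ length ys * fact_weight ys"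
  by (induction ys) (simp_all add: poisson_prob_list_def power_add)

lemma sum_poisson_prob_list_sum_list_le:
  "(\<Sum>ys | length ys = n \<and> sum_list ys \<le> K. poisson_prob_list lam ys) = poisson_cdf (real n * lam) K"
proof -
  have "{ys. length ys = n \<and> sum_list ys \<le> K} = (\<Union>k\<le>K. lists_with_sum n k)"
    by (auto simp: lists_with_sum_def)
  then have "(\<Sum>ys | length ys = n \<and> sum_list ys \<le> K. poisson_prob_list lam ys)
      = (\<Sum>k\<le>K. \<Sum>ys\<in>lists_with_sum n k. poisson_prob_list lam ys)"
    by (simp only:) (rule sum.UNION_disjoint; use finite_lists_with_sum in \<open>auto simp: lists_with_sum_def\<close>)
  also have "\<dots> = (\<Sum>k\<le>K. lam ^ k * exp (- lam) ^ n * (real n ^ k / fact k))"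
    by (simp add: poisson_prob_list_eq lists_with_sum_def sum_distrib_left[symmetric]
        sum_fact_weight_lists_with_sum[unfolded lists_with_sum_def])
  also have "\<dots> = poisson_cdf (real n * lam) K"
    by (simp add: poisson_cdf_def exp_of_nat_mult[symmetric] power_mult_distrib field_simps)
  finally show ?thesis .
qed

lemma sum_poisson_prob_first_passages:
  "(\<Sum>ys\<in>first_passages m h. poisson_prob_list lam ys) = lam ^ (m - h) * exp (- lam) ^ m * ballot_weight m h"
proof -
  have "poisson_prob_list lam ys = lam ^ (m - h) * exp (- lam) ^ m * fact_weight ys"
    if "ys \<in> first_passages m h" for ys
  proof -
    from that have "length ys = m" "sum_list ys = m - h"
      by (auto simp: first_passages_def dest: first_passage_sum_list)
    then show ?thesis by (simp add: poisson_prob_list_eq)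
  qed
  then show ?thesis
    by (simp add: sum_distrib_left sum_fact_weight_first_passages[symmetric])
qed

lemma sum_poisson_prob_stopping_lists:
  assumes "2 \<le> w"
  shows "(\<Sum>ys\<in>stopping_lists w. poisson_prob_list lam ys)
    = real (w - 1) ^ (w - 2) / (real w * fact (w - 2)) * lam ^ w * exp (- real w * lam)"
proof -
  obtain v where w: "w = Suc (Suc v)" using assms by (metis add_2_eq_Suc le_Suc_ex)
  have "(\<Sum>ys\<in>stopping_lists w. poisson_prob_list lam ys)
      = (\<Sum>j\<le>v. \<Sum>zs\<in>first_passages (Suc v) (j + 1). poisson_prob_list lam ((j + 2) # zs))"
    unfolding w stopping_lists_Suc_Suc
    by (rule sum_UN_Cons) (auto simp: finite_first_passages inj_on_def)
  also have "\<dots> = (\<Sum>j\<le>v. lam ^ (v + 2) * exp (- lam) ^ (v + 2)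
      * (ballot_weight (v + 1) (j + 1) / fact (j + 2)))"
  proof (rule sum.cong[OF refl])
    fix j assume "j \<in> {..v}"
    then have powers: "lam ^ j * lam ^ (v - j) = lam ^ v"
      by (simp add: power_add[symmetric])
    show "(\<Sum>zs\<in>first_passages (Suc v) (j + 1). poisson_prob_list lam ((j + 2) # zs))
        = lam ^ (v + 2) * exp (- lam) ^ (v + 2) * (ballot_weight (v + 1) (j + 1) / fact (j + 2))"
      by (simp only: poisson_prob_list_Cons sum_distrib_left[symmetric]
          sum_poisson_prob_first_passages) (simp add: field_simps powers)
  qed
  also have "\<dots> = lam ^ (v + 2) * exp (- lam) ^ (v + 2) * (real (v + 1) ^ v / (real (v + 2) * fact v))"
    by (simp only: sum_distrib_left[symmetric] sum_ballot_weight_over_fact)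
  also have "\<dots> = real (w - 1) ^ (w - 2) / (real w * fact (w - 2)) * lam ^ w * exp (- real w * lam)"
  proof -
    have "exp (- lam) ^ (v + 2) = exp (- real (v + 2) * lam)"
      by (simp only: exp_of_nat_mult[symmetric] mult_minus_left mult_minus_right)
    then show ?thesis by (simp add: w mult_ac)
  qed
  finally show ?thesis .
qed

section \<open>The stopping time\<close>

definition first_values :: "(nat \<Rightarrow> 'a \<Rightarrow> nat) \<Rightarrow> nat \<Rightarrow> 'a \<Rightarrow> nat list" where
  "first_values Y n \<omega> = map (\<lambda>i. Y (Suc i) \<omega>) [0..<n]"

lemma length_first_values [simp]: "length (first_values Y n \<omega>) = n"
  by (simp add: first_values_def)

lemma nth_first_values [simp]: "i < n \<Longrightarrow> first_values Y n \<omega> ! i = Y (Suc i) \<omega>"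
  by (simp add: first_values_def)

lemma take_first_values: "m \<le> n \<Longrightarrow> take m (first_values Y n \<omega>) = first_values Y m \<omega>"
  by (simp add: first_values_def take_map)

lemma sum_list_first_values: "sum_list (first_values Y n \<omega>) = (\<Sum>i = 1..n. Y i \<omega>)"
  by (simp add: first_values_def sum_list_sum_nth atLeast0LessThan sum.atLeast1_atMost_eq)

lemma first_values_eq_iff:
  "first_values Y n \<omega> = ys \<longleftrightarrow> length ys = n \<and> (\<forall>i<n. Y (Suc i) \<omega> = ys ! i)"
proof
  assume "first_values Y n \<omega> = ys"
  then show "length ys = n \<and> (\<forall>i<n. Y (Suc i) \<omega> = ys ! i)"
    by (metis length_first_values nth_first_values)
next
  assume "length ys = n \<and> (\<forall>i<n. Y (Suc i) \<omega> = ys ! i)"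
  then show "first_values Y n \<omega> = ys" by (intro nth_equalityI) auto
qed

lemma stop_time_never:
  assumes "Y 1 \<omega> \<noteq> 0" "\<forall>z\<ge>1. z < (\<Sum>i = 1..z. Y i \<omega>)"
  shows "stop_time Y \<omega> = (LEAST z::nat. False)"
proof -
  have "\<not> (1 \<le> z \<and> (\<Sum>i = 1..z. Y i \<omega>) \<le> z)" for z
  proof
    assume "1 \<le> z \<and> (\<Sum>i = 1..z. Y i \<omega>) \<le> z"
    with assms(2) show False by auto
  qed
  then have "(\<lambda>z. 1 \<le> z \<and> (\<Sum>i = 1..z. Y i \<omega>) \<le> z) = (\<lambda>z. False)" by blast
  then show ?thesis using assms(1) by (simp add: stop_time_def)
qed

lemma
  assumes stops: "Y 1 \<omega> \<noteq> 0 \<Longrightarrow> \<exists>z\<ge>1. (\<Sum>i = 1..z. Y i \<omega>) \<le> z"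
  shows stop_time_eq_0_iff: "stop_time Y \<omega> = 0 \<longleftrightarrow> Y 1 \<omega> = 0"
    and stop_time_eq_1_iff: "stop_time Y \<omega> = 1 \<longleftrightarrow> Y 1 \<omega> = 1"
    and stop_time_eq_iff_stopping_lists:
      "2 \<le> n \<Longrightarrow> stop_time Y \<omega> = n \<longleftrightarrow> first_values Y n \<omega> \<in> stopping_lists n"
proof -
  define P where "P z \<longleftrightarrow> 1 \<le> z \<and> (\<Sum>i = 1..z. Y i \<omega>) \<le> z" for z
  have stop: "stop_time Y \<omega> = (if Y 1 \<omega> = 0 then 0 else Least P)"
    by (simp add: stop_time_def P_def[abs_def])
  have least: "P (Least P)" if "Y 1 \<omega> \<noteq> 0"
    using stops[OF that] LeastI[of P] unfolding P_def by blast
  show "stop_time Y \<omega> = 0 \<longleftrightarrow> Y 1 \<omega> = 0"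
    using stop least by (auto simp: P_def)
  show "stop_time Y \<omega> = 1 \<longleftrightarrow> Y 1 \<omega> = 1"
  proof
    assume "stop_time Y \<omega> = 1"
    then show "Y 1 \<omega> = 1" using stop least by (auto simp: P_def split: if_splits)
  next
    assume Y1: "Y 1 \<omega> = 1"
    then have "Least P = 1" by (intro Least_equality) (auto simp: P_def)
    then show "stop_time Y \<omega> = 1" using stop Y1 by simp
  qed
  assume n: "2 \<le> n"
  have sums: "(\<Sum>i = 1..z. Y i \<omega>) = sum_list (take z (first_values Y n \<omega>))" if "z \<le> n" for z
    using that by (simp add: take_first_values sum_list_first_values)
  show "stop_time Y \<omega> = n \<longleftrightarrow> first_values Y n \<omega> \<in> stopping_lists n"
  proof
    assume stop_n: "stop_time Y \<omega> = n"
    then have Y1: "Y 1 \<omega> \<noteq> 0" using stop n by (auto split: if_splits)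
    then have least_n: "Least P = n" using stop stop_n by simp
    have "z < sum_list (take z (first_values Y n \<omega>))" if "1 \<le> z" "z < n" for z
    proof -
      have "\<not> P z" using not_less_Least[of z P] that(2) least_n by simp
      then show ?thesis using that sums[of z] by (simp add: P_def)
    qed
    moreover have "sum_list (first_values Y n \<omega>) \<le> n"
    proof -
      have "P n" using least[OF Y1] least_n by simp
      then show ?thesis by (simp add: P_def sum_list_first_values)
    qed
    ultimately show "first_values Y n \<omega> \<in> stopping_lists n"
      by (simp add: stopping_lists_def)
  next
    assume stopping: "first_values Y n \<omega> \<in> stopping_lists n"
    then have below: "z < (\<Sum>i = 1..z. Y i \<omega>)" if "1 \<le> z" "z < n" for z
      using that sums by (simp add: stopping_lists_def)
    then have "Y 1 \<omega> \<noteq> 0" using below[of 1] n by simp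
    moreover have "Least P = n"
    proof (rule Least_equality)
      show "P n" using stopping n by (simp add: stopping_lists_def P_def sum_list_first_values)
      show "n \<le> z" if "P z" for z
      proof (rule ccontr)
        assume "\<not> n \<le> z"
        then show False using that below[of z] by (simp add: P_def)
      qed
    qed
    ultimately show "stop_time Y \<omega> = n" using stop by simp
  qed
qed

section \<open>The probabilistic model\<close>

lemma (in prob_space) integral_nat_valued:
  fixes g :: "'a \<Rightarrow> nat"
  assumes events: "\<And>n. {\<omega> \<in> space M. g \<omega> = n} \<in> events"
    and series: "(\<lambda>n. real n * prob {\<omega> \<in> space M. g \<omega> = n}) sums E"
  shows "integrable M (\<lambda>\<omega>. real (g \<omega>)) \<and> integral\<^sup>L M (\<lambda>\<omega>. real (g \<omega>)) = E"
proof -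
  have "g \<in> measurable M (count_space UNIV)"
    unfolding measurable_count_space_eq2_countable
    using events by (auto simp: vimage_def Int_def conj_commute)
  then have measurable: "(\<lambda>\<omega>. real (g \<omega>)) \<in> borel_measurable M" by simp
  have terms_nonneg: "0 \<le> real n * prob {\<omega> \<in> space M. g \<omega> = n}" for n by simp
  have summable: "summable (\<lambda>n. real n * prob {\<omega> \<in> space M. g \<omega> = n})"
    and E: "E = (\<Sum>n. real n * prob {\<omega> \<in> space M. g \<omega> = n})"
    using series by (simp_all add: sums_iff)
  then have "0 \<le> E" by (simp add: suminf_nonneg)
  have "(\<integral>\<^sup>+\<omega>. ennreal (real (g \<omega>)) \<partial>M)
      = (\<integral>\<^sup>+\<omega>. (\<Sum>n. ennreal (real n) * indicator {\<omega> \<in> space M. g \<omega> = n} \<omega>) \<partial>M)"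
  proof (rule nn_integral_cong)
    fix \<omega> assume "\<omega> \<in> space M"
    then have "(\<Sum>n. ennreal (real n) * indicator {\<omega> \<in> space M. g \<omega> = n} \<omega>)
        = (\<Sum>n\<in>{g \<omega>}. ennreal (real n) * indicator {\<omega> \<in> space M. g \<omega> = n} \<omega>)"
      by (intro suminf_finite) auto
    then show "ennreal (real (g \<omega>)) = (\<Sum>n. ennreal (real n) * indicator {\<omega> \<in> space M. g \<omega> = n} \<omega>)"
      using \<open>\<omega> \<in> space M\<close> by simp
  qed
  also have "\<dots> = (\<Sum>n. \<integral>\<^sup>+\<omega>. ennreal (real n) * indicator {\<omega> \<in> space M. g \<omega> = n} \<omega> \<partial>M)"
    using events by (intro nn_integral_suminf) auto
  also have "\<dots> = (\<Sum>n. ennreal (real n * prob {\<omega> \<in> space M. g \<omega> = n}))"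
    using events by (simp add: nn_integral_cmult_indicator emeasure_eq_measure ennreal_mult)
  also have "\<dots> = ennreal E"
    unfolding E using terms_nonneg summable by (rule suminf_ennreal2)
  finally have "has_bochner_integral M (\<lambda>\<omega>. real (g \<omega>)) E"
    using measurable \<open>0 \<le> E\<close> by (intro has_bochner_integral_nn_integral) auto
  then show ?thesis by (simp add: has_bochner_integral_iff)
qed

locale poisson_sequence = prob_space M for M :: "'a measure" +
  fixes Y :: "nat \<Rightarrow> 'a \<Rightarrow> nat" and lam :: real
  assumes lam_nonneg: "0 \<le> lam" and lam_less_1: "lam < 1"
    and indep: "indep_vars (\<lambda>_. count_space UNIV) Y {1..}"
    and distr: "\<And>i k. 1 \<le> i \<Longrightarrow> prob {\<omega> \<in> space M. Y i \<omega> = k} = lam ^ k / fact k * exp (- lam)"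
begin

lemma events_Y_eq:
  assumes "1 \<le> i"
  shows "{\<omega> \<in> space M. Y i \<omega> = k} \<in> events"
proof -
  have "Y i \<in> measurable M (count_space UNIV)" using indep assms by (auto simp: indep_vars_def)
  from measurable_sets[OF this, of "{k}"] show ?thesis by (simp add: vimage_def Int_def conj_commute)
qed

lemma events_first_values_eq: "{\<omega> \<in> space M. first_values Y n \<omega> = ys} \<in> events"
proof (cases "length ys = n \<and> n \<noteq> 0")
  case True
  then have "{\<omega> \<in> space M. first_values Y n \<omega> = ys} = (\<Inter>i<n. {\<omega> \<in> space M. Y (Suc i) \<omega> = ys ! i})"
    by (auto simp: first_values_eq_iff)
  then show ?thesis using True by (auto intro!: sets.finite_INT events_Y_eq)
next
  case False
  then have "{\<omega> \<in> space M. first_values Y n \<omega> = ys} = (if length ys = n then space M else {})"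
    by (auto simp: first_values_eq_iff)
  then show ?thesis by simp
qed

lemma prob_first_values_eq:
  "prob {\<omega> \<in> space M. first_values Y (length ys) \<omega> = ys} = poisson_prob_list lam ys"
proof (cases "ys = []")
  case True
  then show ?thesis by (simp add: first_values_eq_iff poisson_prob_list_def prob_space)
next
  case False
  define n where "n = length ys"
  have J: "Suc ` {..<n} \<noteq> {}" "finite (Suc ` {..<n})" "Suc ` {..<n} \<subseteq> {1..}"
    using False by (auto simp: n_def)
  have "{\<omega> \<in> space M. first_values Y n \<omega> = ys} = (\<Inter>i\<in>Suc ` {..<n}. Y i -` {ys ! (i - 1)} \<inter> space M)"
    using False by (auto simp: first_values_eq_iff n_def)
  also have "prob \<dots> = (\<Prod>i\<in>Suc ` {..<n}. prob (Y i -` {ys ! (i - 1)} \<inter> space M))"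
    by (rule indep_varsD[OF indep J]) simp
  also have "\<dots> = (\<Prod>i<n. lam ^ (ys ! i) / fact (ys ! i) * exp (- lam))"
    by (simp add: prod.reindex vimage_def Int_def conj_commute distr)
  also have "\<dots> = poisson_prob_list lam ys"
    by (simp add: poisson_prob_list_def prod.list_conv_set_nth n_def atLeast0LessThan)
  finally show ?thesis by (simp add: n_def)
qed

lemma
  assumes "finite B" "\<And>ys. ys \<in> B \<Longrightarrow> length ys = n"
  shows events_first_values_in: "{\<omega> \<in> space M. first_values Y n \<omega> \<in> B} \<in> events"
    and prob_first_values_in: "prob {\<omega> \<in> space M. first_values Y n \<omega> \<in> B} = (\<Sum>ys\<in>B. poisson_prob_list lam ys)"
proof -
  have eq: "{\<omega> \<in> space M. first_values Y n \<omega> \<in> B} = (\<Union>ys\<in>B. {\<omega> \<in> space M. first_values Y n \<omega> = ys})"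
    by auto
  show "{\<omega> \<in> space M. first_values Y n \<omega> \<in> B} \<in> events"
    unfolding eq using assms(1) events_first_values_eq by auto
  have "prob (\<Union>ys\<in>B. {\<omega> \<in> space M. first_values Y n \<omega> = ys})
      = (\<Sum>ys\<in>B. prob {\<omega> \<in> space M. first_values Y n \<omega> = ys})"
    using assms(1) events_first_values_eq
    by (intro finite_measure_finite_Union) (auto simp: disjoint_family_on_def)
  moreover have "prob {\<omega> \<in> space M. first_values Y n \<omega> = ys} = poisson_prob_list lam ys"
    if "ys \<in> B" for ys
    using prob_first_values_eq[of ys] assms(2)[OF that] by simp
  ultimately show "prob {\<omega> \<in> space M. first_values Y n \<omega> \<in> B} = (\<Sum>ys\<in>B. poisson_prob_list lam ys)"
    unfolding eq by simp
qed

lemma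
  shows events_partial_sum_le: "{\<omega> \<in> space M. (\<Sum>i = 1..n. Y i \<omega>) \<le> K} \<in> events"
    and prob_partial_sum_le: "prob {\<omega> \<in> space M. (\<Sum>i = 1..n. Y i \<omega>) \<le> K} = poisson_cdf (real n * lam) K"
proof -
  have eq: "{\<omega> \<in> space M. (\<Sum>i = 1..n. Y i \<omega>) \<le> K}
      = {\<omega> \<in> space M. first_values Y n \<omega> \<in> {ys. length ys = n \<and> sum_list ys \<le> K}}"
    by (auto simp: sum_list_first_values)
  show "{\<omega> \<in> space M. (\<Sum>i = 1..n. Y i \<omega>) \<le> K} \<in> events"
    unfolding eq by (rule events_first_values_in[OF finite_lists_sum_list_le]) auto
  show "prob {\<omega> \<in> space M. (\<Sum>i = 1..n. Y i \<omega>) \<le> K} = poisson_cdf (real n * lam) K"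
    unfolding eq sum_poisson_prob_list_sum_list_le[symmetric]
    by (rule prob_first_values_in[OF finite_lists_sum_list_le]) auto
qed

lemma first_passage_probs_sums:
  assumes h: "0 < h"
  shows "(\<lambda>m. lam ^ (m - h) * exp (- lam) ^ m * ballot_weight m h) sums 1"
proof -
  define F where "F m = {\<omega> \<in> space M. first_values Y m \<omega> \<in> first_passages m h}" for m
  have F_events: "F m \<in> events" for m
    unfolding F_def by (rule events_first_values_in[OF finite_first_passages]) (simp add: first_passages_def)
  have prob_F: "prob (F m) = lam ^ (m - h) * exp (- lam) ^ m * ballot_weight m h" for m
    unfolding F_def sum_poisson_prob_first_passages[symmetric]
    by (rule prob_first_values_in[OF finite_first_passages]) (simp add: first_passages_def)
  have "F m \<inter> F m' = {}" if "m < m'" for m m'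
  proof -
    have "\<omega> \<notin> F m \<inter> F m'" for \<omega>
    proof
      assume "\<omega> \<in> F m \<inter> F m'"
      then have "first_passage h (first_values Y m \<omega>)" "first_passage h (first_values Y m' \<omega>)"
        by (auto simp: F_def first_passages_def)
      moreover have "first_values Y m' \<omega> = first_values Y m \<omega> @ drop m (first_values Y m' \<omega>)"
        using take_first_values[of m m' Y \<omega>] that by (metis append_take_drop_id less_imp_le)
      ultimately have "drop m (first_values Y m' \<omega>) = []" by (metis first_passage_append)
      then show False using that by simp
    qed
    then show ?thesis by blast
  qed
  then have "disjoint_family F"
    by (metis disjoint_family_on_def inf_commute linorder_neqE_nat)
  then have partial: "(\<Sum>m\<le>n. prob (F m)) = prob (\<Union>m\<le>n. F m)" for n
    using F_events by (intro finite_measure_finite_Union[symmetric]) (auto intro: disjoint_family_on_mono)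
  have lower: "poisson_cdf (real n * lam) (n - h) \<le> (\<Sum>m\<le>n. prob (F m))" if "h \<le> n" for n
  proof -
    have "{\<omega> \<in> space M. (\<Sum>i = 1..n. Y i \<omega>) \<le> n - h} \<subseteq> (\<Union>m\<le>n. F m)"
    proof
      fix \<omega> assume \<omega>: "\<omega> \<in> {\<omega> \<in> space M. (\<Sum>i = 1..n. Y i \<omega>) \<le> n - h}"
      then have "\<not> length (first_values Y n \<omega>) < h + sum_list (first_values Y n \<omega>)"
        using that by (auto simp: sum_list_first_values)
      then obtain m where "m \<le> n" "first_passage h (take m (first_values Y n \<omega>))"
        using first_passage_prefix_or_above[OF h, of "first_values Y n \<omega>"] by auto
      with \<omega> show "\<omega> \<in> (\<Union>m\<le>n. F m)" by (auto simp: F_def first_passages_def take_first_values)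
    qed
    then have "prob {\<omega> \<in> space M. (\<Sum>i = 1..n. Y i \<omega>) \<le> n - h} \<le> prob (\<Union>m\<le>n. F m)"
      using F_events by (intro finite_measure_mono) auto
    then show ?thesis unfolding partial prob_partial_sum_le .
  qed
  have "(\<lambda>n. \<Sum>m\<le>n. prob (F m)) \<longlonglongrightarrow> 1"
  proof (rule tendsto_sandwich[OF _ _ poisson_cdf_tendsto_1[OF lam_nonneg lam_less_1] tendsto_const])
    show "\<forall>\<^sub>F n in sequentially. poisson_cdf (real n * lam) (n - h) \<le> (\<Sum>m\<le>n. prob (F m))"
      using eventually_ge_at_top[of h] by eventually_elim (rule lower)
  qed (simp add: partial)
  then show ?thesis by (simp add: sums_def_le prob_F)
qed

lemma ballot_weight_series: "(\<lambda>m. ballot_weight m h * (lam * exp (- lam)) ^ m) sums lam ^ h"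
proof (cases "h = 0")
  case True
  have "(\<lambda>m. if m = 0 then 1 else 0) sums (1::real)"
    using sums_single[of 0 "\<lambda>_. 1::real"] by simp
  moreover have "ballot_weight m 0 * (lam * exp (- lam)) ^ m = (if m = 0 then 1 else 0)" for m
    by (simp add: ballot_weight_def)
  ultimately show ?thesis using True by simp
next
  case False
  have "lam ^ h * (lam ^ (m - h) * exp (- lam) ^ m * ballot_weight m h) = ballot_weight m h * (lam * exp (- lam)) ^ m"
    for m
    by (cases "m < h") (simp_all add: ballot_weight_def power_mult_distrib power_add[symmetric])
  with sums_mult[OF first_passage_probs_sums, of h "lam ^ h"] False show ?thesis by simp
qed

text \<open>Obtained by summing the first passage generating functions over all starting heights.\<close>
lemma tree_series_sums: "(\<lambda>m. real m ^ m / fact m * (lam * exp (- lam)) ^ m) sums (1 / (1 - lam))"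
proof -
  have geometric: "(\<lambda>h. lam ^ h) sums (1 / (1 - lam))"
    using lam_nonneg lam_less_1 by (intro geometric_sums) simp
  have "(\<lambda>m. \<Sum>h\<le>m. ballot_weight m h * (lam * exp (- lam)) ^ m) sums (\<Sum>h. lam ^ h)"
    using lam_nonneg geometric
    by (intro sums_row_sums_lower_triangular ballot_weight_series sums_summable)
      (auto simp: ballot_weight_nonneg ballot_weight_def)
  then show ?thesis
    using geometric by (simp add: sum_distrib_right[symmetric] sum_ballot_weight sums_iff)
qed

text \<open>On this null set \<open>stop_time\<close> is the unspecified constant \<open>LEAST z. False\<close>.\<close>
definition never_stops :: "'a set" where
  "never_stops = {\<omega> \<in> space M. Y 1 \<omega> \<noteq> 0 \<and> (\<forall>z\<ge>1. z < (\<Sum>i = 1..z. Y i \<omega>))}"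

lemma events_never_stops: "never_stops \<in> events"
proof -
  have "never_stops = (space M - {\<omega> \<in> space M. Y 1 \<omega> = 0})
      \<inter> (\<Inter>z\<in>{1..}. space M - {\<omega> \<in> space M. (\<Sum>i = 1..z. Y i \<omega>) \<le> z})"
    by (auto simp: never_stops_def not_le)
  also have "\<dots> \<in> events"
    using events_partial_sum_le by (intro sets.Int sets.Diff sets.countable_INT events_Y_eq) auto
  finally show ?thesis .
qed

lemma prob_never_stops: "prob never_stops = 0"
proof -
  have bound: "prob never_stops \<le> 1 - poisson_cdf (real n * lam) (n - 0)" if "1 \<le> n" for n
  proof -
    have "never_stops \<subseteq> space M - {\<omega> \<in> space M. (\<Sum>i = 1..n. Y i \<omega>) \<le> n}"
      using that by (auto simp: never_stops_def not_le)
    then have "prob never_stops \<le> prob (space M - {\<omega> \<in> space M. (\<Sum>i = 1..n. Y i \<omega>) \<le> n})"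
      using events_partial_sum_le by (intro finite_measure_mono) auto
    also have "\<dots> = 1 - poisson_cdf (real n * lam) n"
      by (simp only: prob_compl[OF events_partial_sum_le] prob_partial_sum_le)
    finally show ?thesis by simp
  qed
  have "(\<lambda>n. 1 - poisson_cdf (real n * lam) (n - 0)) \<longlonglongrightarrow> 1 - 1"
    by (intro tendsto_intros poisson_cdf_tendsto_1 lam_nonneg lam_less_1)
  then have "prob never_stops \<le> 1 - 1"
    by (rule LIMSEQ_le_const) (use bound in auto)
  then show ?thesis by (simp add: measure_le_0_iff)
qed

lemma
  assumes iff: "\<And>\<omega>. \<omega> \<in> space M \<Longrightarrow> \<omega> \<notin> never_stops \<Longrightarrow> Q (stop_time Y \<omega>) \<longleftrightarrow> P \<omega>"
    and never: "\<And>\<omega>. \<omega> \<in> never_stops \<Longrightarrow> \<not> P \<omega>"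
    and events: "{\<omega> \<in> space M. P \<omega>} \<in> events"
  shows events_stop_time: "{\<omega> \<in> space M. Q (stop_time Y \<omega>)} \<in> events"
    and prob_stop_time: "prob {\<omega> \<in> space M. Q (stop_time Y \<omega>)} = prob {\<omega> \<in> space M. P \<omega>}"
proof -
  define N where "N = (if Q (LEAST z::nat. False) then never_stops else {})"
  have stop_never: "stop_time Y \<omega> = (LEAST z::nat. False)" if "\<omega> \<in> never_stops" for \<omega>
    using that by (intro stop_time_never) (auto simp: never_stops_def)
  have "never_stops \<subseteq> space M" by (auto simp: never_stops_def)
  then have eq: "{\<omega> \<in> space M. Q (stop_time Y \<omega>)} = {\<omega> \<in> space M. P \<omega>} \<union> N"
    using iff never stop_never by (auto simp: N_def) (metis iff stop_never)
  have N: "N \<in> events" "prob N = 0" "{\<omega> \<in> space M. P \<omega>} \<inter> N = {}"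
    using events_never_stops prob_never_stops never by (auto simp: N_def)
  show "{\<omega> \<in> space M. Q (stop_time Y \<omega>)} \<in> events" unfolding eq using events N by auto
  show "prob {\<omega> \<in> space M. Q (stop_time Y \<omega>)} = prob {\<omega> \<in> space M. P \<omega>}"
    unfolding eq using finite_measure_Union[OF events N(1,3)] N(2) by simp
qed

lemma stop_time_outside_never_stops:
  assumes "\<omega> \<in> space M" "\<omega> \<notin> never_stops"
  shows "Y 1 \<omega> \<noteq> 0 \<Longrightarrow> \<exists>z\<ge>1. (\<Sum>i = 1..z. Y i \<omega>) \<le> z"
  using assms by (auto simp: never_stops_def not_less)

lemma
  shows events_stop_time_eq: "{\<omega> \<in> space M. stop_time Y \<omega> = n} \<in> events"
    and prob_stop_time_eq: "prob {\<omega> \<in> space M. stop_time Y \<omega> = n} =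
      (if n = 0 then exp (- lam) else if n = 1 then lam * exp (- lam)
       else real (n - 1) ^ (n - 2) / (real n * fact (n - 2)) * lam ^ n * exp (- real n * lam))"
proof -
  have first_step: "\<omega> \<in> never_stops \<Longrightarrow> 1 < Y 1 \<omega>" for \<omega>
    by (auto simp: never_stops_def)
  consider "n = 0" | "n = 1" | "2 \<le> n" by linarith
  then have "{\<omega> \<in> space M. stop_time Y \<omega> = n} \<in> events
      \<and> prob {\<omega> \<in> space M. stop_time Y \<omega> = n} =
      (if n = 0 then exp (- lam) else if n = 1 then lam * exp (- lam)
       else real (n - 1) ^ (n - 2) / (real n * fact (n - 2)) * lam ^ n * exp (- real n * lam))"
  proof cases
    case 1
    have "stop_time Y \<omega> = n \<longleftrightarrow> Y 1 \<omega> = 0" if "\<omega> \<in> space M" "\<omega> \<notin> never_stops" for \<omega>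
      using stop_time_eq_0_iff[of Y \<omega>, OF stop_time_outside_never_stops[OF that]] 1 by simp
    moreover have "\<not> Y 1 \<omega> = 0" if "\<omega> \<in> never_stops" for \<omega> using first_step[OF that] by simp
    ultimately show ?thesis
      using events_stop_time[of "\<lambda>s. s = n"] prob_stop_time[of "\<lambda>s. s = n"]
        events_Y_eq[of 1 0] distr[of 1 0] 1 by simp
  next
    case 2
    have "stop_time Y \<omega> = n \<longleftrightarrow> Y 1 \<omega> = 1" if "\<omega> \<in> space M" "\<omega> \<notin> never_stops" for \<omega>
      using stop_time_eq_1_iff[of Y \<omega>, OF stop_time_outside_never_stops[OF that]] 2 by simp
    moreover have "\<not> Y 1 \<omega> = 1" if "\<omega> \<in> never_stops" for \<omega> using first_step[OF that] by simp
    ultimately show ?thesis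
      using events_stop_time[of "\<lambda>s. s = n"] prob_stop_time[of "\<lambda>s. s = n"]
        events_Y_eq[of 1 1] distr[of 1 1] 2 by simp
  next
    case 3
    have "stop_time Y \<omega> = n \<longleftrightarrow> first_values Y n \<omega> \<in> stopping_lists n"
      if "\<omega> \<in> space M" "\<omega> \<notin> never_stops" for \<omega>
      using stop_time_eq_iff_stopping_lists[of Y \<omega>, OF stop_time_outside_never_stops[OF that] 3] .
    moreover have "first_values Y n \<omega> \<notin> stopping_lists n" if "\<omega> \<in> never_stops" for \<omega>
    proof -
      have "n < (\<Sum>i = 1..n. Y i \<omega>)" using that 3 by (auto simp: never_stops_def)
      then show ?thesis by (simp add: stopping_lists_def sum_list_first_values)
    qed
    moreover have "{\<omega> \<in> space M. first_values Y n \<omega> \<in> stopping_lists n} \<in> events"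
      "prob {\<omega> \<in> space M. first_values Y n \<omega> \<in> stopping_lists n}
        = (\<Sum>ys\<in>stopping_lists n. poisson_prob_list lam ys)"
      by (intro events_first_values_in prob_first_values_in finite_stopping_lists;
          simp add: stopping_lists_def)+
    ultimately show ?thesis
      using events_stop_time[of "\<lambda>s. s = n"] prob_stop_time[of "\<lambda>s. s = n"]
        sum_poisson_prob_stopping_lists 3 by simp
  qed
  then show "{\<omega> \<in> space M. stop_time Y \<omega> = n} \<in> events"
    and "prob {\<omega> \<in> space M. stop_time Y \<omega> = n} =
      (if n = 0 then exp (- lam) else if n = 1 then lam * exp (- lam)
       else real (n - 1) ^ (n - 2) / (real n * fact (n - 2)) * lam ^ n * exp (- real n * lam))"
    by auto
qed

lemma expectation_stop_time:
  "integrable M (\<lambda>\<omega>. real (stop_time Y \<omega>))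
    \<and> integral\<^sup>L M (\<lambda>\<omega>. real (stop_time Y \<omega>)) = lam * exp (- lam) / (1 - lam)"
proof (rule integral_nat_valued[OF events_stop_time_eq])
  define x where "x = lam * exp (- lam)"
  have "real (Suc m) * prob {\<omega> \<in> space M. stop_time Y \<omega> = Suc m} = x * (real m ^ m / fact m * x ^ m)"
    for m
  proof (cases m)
    case 0
    then show ?thesis by (simp add: prob_stop_time_eq x_def)
  next
    case (Suc k)
    have "exp (- lam) ^ (k + 2) = exp (- real (k + 2) * lam)"
      by (simp only: exp_of_nat_mult[symmetric] mult_minus_left mult_minus_right)
    then have "x ^ (k + 2) = lam ^ (k + 2) * exp (- real (k + 2) * lam)"
      by (simp add: x_def power_mult_distrib)
    then show ?thesis
      by (simp add: Suc prob_stop_time_eq fact_Suc field_simps del: of_nat_Suc)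
  qed
  then have "(\<lambda>m. real (Suc m) * prob {\<omega> \<in> space M. stop_time Y \<omega> = Suc m}) sums (x * (1 / (1 - lam)))"
    using sums_mult[OF tree_series_sums[folded x_def], of x] by simp
  then show "(\<lambda>n. real n * prob {\<omega> \<in> space M. stop_time Y \<omega> = n}) sums (lam * exp (- lam) / (1 - lam))"
    using sums_Suc_iff[of "\<lambda>n. real n * prob {\<omega> \<in> space M. stop_time Y \<omega> = n}"] by (simp add: x_def)
qed

lemma prob_max_stop_time_eq_1:
  "prob {\<omega> \<in> space M. max (stop_time Y \<omega>) 1 = 1} = (lam + 1) * exp (- lam)"
proof -
  have "{\<omega> \<in> space M. max (stop_time Y \<omega>) 1 = 1}
      = {\<omega> \<in> space M. stop_time Y \<omega> = 0} \<union> {\<omega> \<in> space M. stop_time Y \<omega> = 1}"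
    by (auto simp: max_def)
  moreover have "prob \<dots> = prob {\<omega> \<in> space M. stop_time Y \<omega> = 0} + prob {\<omega> \<in> space M. stop_time Y \<omega> = 1}"
    by (rule finite_measure_Union) (auto intro: events_stop_time_eq)
  ultimately show ?thesis by (simp add: prob_stop_time_eq field_simps)
qed

lemma prob_max_stop_time_eq:
  assumes "2 \<le> w"
  shows "prob {\<omega> \<in> space M. max (stop_time Y \<omega>) 1 = w}
    = real (w - 1) ^ (w - 2) / (real w * fact (w - 2)) * lam ^ w * exp (- real w * lam)"
proof -
  have "{\<omega> \<in> space M. max (stop_time Y \<omega>) 1 = w} = {\<omega> \<in> space M. stop_time Y \<omega> = w}"
    using assms by (auto simp: max_def)
  then show ?thesis using assms by (simp add: prob_stop_time_eq)
qed

lemma expectation_max_stop_time: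
  "integrable M (\<lambda>\<omega>. real (max (stop_time Y \<omega>) 1))
    \<and> integral\<^sup>L M (\<lambda>\<omega>. real (max (stop_time Y \<omega>) 1))
      = integral\<^sup>L M (\<lambda>\<omega>. real (stop_time Y \<omega>)) + exp (- lam)"
proof -
  define Z where "Z = {\<omega> \<in> space M. stop_time Y \<omega> = 0}"
  have Z: "Z \<in> events" "prob Z = exp (- lam)"
    by (simp_all add: Z_def events_stop_time_eq prob_stop_time_eq)
  have W_eq: "real (max (stop_time Y \<omega>) 1) = real (stop_time Y \<omega>) + indicator Z \<omega>"
    if "\<omega> \<in> space M" for \<omega>
    using that by (auto simp: Z_def max_def indicator_def)
  have X: "integrable M (\<lambda>\<omega>. real (stop_time Y \<omega>))" using expectation_stop_time by simp
  have "integrable M (\<lambda>\<omega>. real (stop_time Y \<omega>) + indicator Z \<omega>)"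
    using X Z
    by (intro Bochner_Integration.integrable_add integrable_real_indicator) (auto simp: less_top[symmetric])
  moreover have "integral\<^sup>L M (\<lambda>\<omega>. real (stop_time Y \<omega>) + indicator Z \<omega>)
      = integral\<^sup>L M (\<lambda>\<omega>. real (stop_time Y \<omega>)) + exp (- lam)"
    using X Z by (subst Bochner_Integration.integral_add) (auto simp: less_top[symmetric])
  moreover have "integrable M (\<lambda>\<omega>. real (max (stop_time Y \<omega>) 1))
      \<longleftrightarrow> integrable M (\<lambda>\<omega>. real (stop_time Y \<omega>) + indicator Z \<omega>)"
    by (rule Bochner_Integration.integrable_cong[OF refl W_eq])
  moreover have "integral\<^sup>L M (\<lambda>\<omega>. real (max (stop_time Y \<omega>) 1))
      = integral\<^sup>L M (\<lambda>\<omega>. real (stop_time Y \<omega>) + indicator Z \<omega>)"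
    by (rule Bochner_Integration.integral_cong[OF refl W_eq])
  ultimately show ?thesis by simp
qed

end

theorem corollary2:
  fixes M :: "'a measure" and Y :: "nat \<Rightarrow> 'a \<Rightarrow> nat" and lam :: real
  assumes "prob_space M"
    and "0 \<le> lam" and "lam < 1"
    and "prob_space.indep_vars M (\<lambda>_. count_space UNIV) Y {1..}"
    and "\<And>i k. 1 \<le> i \<Longrightarrow>
           measure M {\<omega> \<in> space M. Y i \<omega> = k} = lam ^ k / fact k * exp (- lam)"
  shows "measure M {\<omega> \<in> space M. max (stop_time Y \<omega>) 1 = 1} = (lam + 1) * exp (- lam)
    \<and> (\<forall>w::nat. 2 \<le> w \<longrightarrow>
          measure M {\<omega> \<in> space M. max (stop_time Y \<omega>) 1 = w}
          = real (w - 1) ^ (w - 2) / (real w * fact (w - 2)) * lam ^ w * exp (- real w * lam))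
    \<and> (0 < lam \<longrightarrow>
          integrable M (\<lambda>\<omega>. real (max (stop_time Y \<omega>) 1))
        \<and> integrable M (\<lambda>\<omega>. real (stop_time Y \<omega>))
        \<and> integral\<^sup>L M (\<lambda>\<omega>. real (max (stop_time Y \<omega>) 1))
            = integral\<^sup>L M (\<lambda>\<omega>. real (stop_time Y \<omega>)) / lam
        \<and> integral\<^sup>L M (\<lambda>\<omega>. real (max (stop_time Y \<omega>) 1)) = exp (- lam) / (1 - lam))"
proof -
  interpret poisson_sequence M Y lam
    using assms by (simp add: poisson_sequence_def poisson_sequence_axioms_def)
  have X: "integrable M (\<lambda>\<omega>. real (stop_time Y \<omega>))"
    "integral\<^sup>L M (\<lambda>\<omega>. real (stop_time Y \<omega>)) = lam * exp (- lam) / (1 - lam)"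
    using expectation_stop_time by simp_all
  have W: "integrable M (\<lambda>\<omega>. real (max (stop_time Y \<omega>) 1))"
    "integral\<^sup>L M (\<lambda>\<omega>. real (max (stop_time Y \<omega>) 1)) = exp (- lam) / (1 - lam)"
    using expectation_max_stop_time X(2) lam_less_1 by (simp_all add: field_simps)
  have "0 < lam \<Longrightarrow> exp (- lam) / (1 - lam) = lam * exp (- lam) / (1 - lam) / lam" by simp
  then show ?thesis
    using prob_max_stop_time_eq_1 prob_max_stop_time_eq X W by simp
qed

end
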